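(* Let $\mathbb{S}$ be a collection of subsets of $\{1,\dots,m\}$, each of size $l$, and let $t$ be a positive integer. Then $$\frac{1}{|\mathbb{S}|^2}\sum_{\mathcal{J},\mathcal{J}'\in\mathbb{S}}|\mathcal{J}\cap\mathcal{J}'|^t\ \ge\ \mathrm{tr}(D_{t,l,m}^2),$$ and equality holds if and only if $\mathbb{S}$ is a $t$-$(m,l,\lambda)$ block design with $\lambda=|\mathbb{S}|\,\mathrm{tr}\big(D_{t,l,m}\bigotimes_{s=1}^tE_{s,s}\big)$.
   Context: Let $\{e_j\}_{j=1}^m$ be the canonical basis of $\mathbb{F}^m$ ($\mathbb{F}=\mathbb{R}$ or $\mathbb{C}$) and $E_{s,s}=e_s\otimes e_s^*$. For $\mathcal{J}\subset\{1,\dots,m\}$ let $D_{\mathcal{J}}=\sum_{j\in\mathcal{J}}E_{j,j}$. The diagonal coherence tensor is $D_{t,l,m}=\binom{m}{l}^{-1}\sum_{\mathcal{J}\in\mathbb{J}}D_{\mathcal{J}}^{\otimes t}$, where $\mathbb{J}$ is the set of all $l$-element subsets of $\{1,\dots,m\}$ and $^{\otimes t}$ is the $t$-fold Kronecker product. A $t$-$(m,l,\lambda)$ block design is a collection of subsets (blocks) of $\{1,\dots,m\}$, each of cardinality $l$, such that every $t$-element subset of $\{1,\dots,m\}$ is contained in exactly $\lambda$ blocks. *)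

theory Defs
  imports "Jordan_Normal_Form.Matrix" "HOL-Library.Multiset"
begin

definition kron :: "real mat \<Rightarrow> real mat \<Rightarrow> real mat" where
  "kron A B = mat (dim_row A * dim_row B) (dim_col A * dim_col B)
     (\<lambda>(i, j). A $$ (i div dim_row B, j div dim_col B) * B $$ (i mod dim_row B, j mod dim_col B))"

definition mtrace :: "real mat \<Rightarrow> real" where
  "mtrace A = (\<Sum>i<dim_row A. A $$ (i, i))"

fun kron_pow :: "real mat \<Rightarrow> nat \<Rightarrow> real mat" where
  "kron_pow A 0 = 1\<^sub>m 1"
| "kron_pow A (Suc n) = kron A (kron_pow A n)"

fun kron_list :: "real mat list \<Rightarrow> real mat" where
  "kron_list [] = 1\<^sub>m 1"
| "kron_list (A # As) = kron A (kron_list As)"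

text \<open>E_{s,s} = e_s e_s^* in F^m, with s in {1..m} (matrix indices are 0-based).\<close>
definition Ess :: "nat \<Rightarrow> nat \<Rightarrow> real mat" where
  "Ess m s = mat m m (\<lambda>(i, j). if i = j \<and> i + 1 = s then 1 else 0)"

text \<open>D_J = sum_{j in J} E_{j,j}, for J a subset of {1..m}.\<close>
definition DJ :: "nat \<Rightarrow> nat set \<Rightarrow> real mat" where
  "DJ m J = mat m m (\<lambda>(i, j). if i = j \<and> i + 1 \<in> J then 1 else 0)"

definition lsubsets :: "nat \<Rightarrow> nat \<Rightarrow> nat set set" where
  "lsubsets l m = {J. J \<subseteq> {1..m} \<and> card J = l}"

text \<open>Diagonal coherence tensor D_{t,l,m} = binom(m,l)^{-1} sum_{J} D_J^{tensor t}
  (the matrix sum written entrywise).\<close>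
definition Dtlm :: "nat \<Rightarrow> nat \<Rightarrow> nat \<Rightarrow> real mat" where
  "Dtlm t l m = mat (m ^ t) (m ^ t)
     (\<lambda>ij. (1 / real (m choose l)) * (\<Sum>J\<in>lsubsets l m. kron_pow (DJ m J) t $$ ij))"

text \<open>t-(m,l,lambda) block design: a collection (multiset) of l-subsets of {1..m}
  such that every t-subset of {1..m} is contained in exactly lambda blocks
  (blocks counted with multiplicity).\<close>
definition block_design :: "nat \<Rightarrow> nat \<Rightarrow> nat \<Rightarrow> nat \<Rightarrow> nat set multiset \<Rightarrow> bool" where
  "block_design t m l lam S \<longleftrightarrow>
     (\<forall>B\<in>#S. B \<subseteq> {1..m} \<and> card B = l) \<and>
     (\<forall>T. T \<subseteq> {1..m} \<and> card T = t \<longrightarrow> size (filter_mset (\<lambda>B. T \<subseteq> B) S) = lam)"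

end

theory Submission
  imports Defs
begin

text \<open>Index the diagonal of the \<open>t\<close>-fold tensor power by \<open>t\<close>-tuples over \<open>{1..m}\<close> and let
  \<open>X(i)\<close> be the set of entries of the tuple \<open>i\<close>. The diagonal of \<open>D_J\<close>'s tensor power is the
  indicator of \<open>X(i) \<subseteq> J\<close>, so \<open>D_{t,l,m}\<close> is diagonal with entries \<open>d(i)\<close>, the fraction of all
  \<open>l\<close>-subsets containing \<open>X(i)\<close>; let \<open>f(i)\<close> be the fraction of blocks of \<open>S\<close> containing \<open>X(i)\<close>.
  Counting the tuples over \<open>J \<inter> J'\<close> gives \<open>\<Sum> f\<^sup>2 = |S|\<^sup>-\<^sup>2 \<Sum>_{J,J'} |J \<inter> J'|^t\<close>, while
  \<open>tr D\<^sup>2 = \<Sum> d\<^sup>2\<close>. As the symmetric group acts transitively on \<open>l\<close>-subsets, \<open>\<Sum>_{J'} |J \<inter> J'|^t\<close>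
  over all \<open>l\<close>-subsets \<open>J'\<close> is the same for every \<open>l\<close>-subset \<open>J\<close>, whence \<open>\<Sum> f d = \<Sum> d\<^sup>2\<close>.
  So the difference of the two sides is \<open>\<Sum> (f - d)\<^sup>2 \<ge> 0\<close>, and it vanishes iff \<open>f\<close> and \<open>d\<close>
  agree on all nonempty sets of at most \<open>t\<close> points. Double counting shows that this happens
  exactly for \<open>t\<close>-designs, and then \<open>\<lambda> = |S| d(1,\<dots>,t)\<close>.\<close>

lemma div_mod_less_power:
  fixes i m n :: nat
  assumes "i < m ^ Suc n"
  shows "i div m ^ n < m" "i mod m ^ n < m ^ n"
proof -
  show "i div m ^ n < m"
    using assms by (simp add: less_mult_imp_div_less mult.commute)
  have "m ^ n > 0"
    using assms by (cases "m ^ n") auto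
  then show "i mod m ^ n < m ^ n" by simp
qed

lemma nat_eq_iff_div_mod_eq: "(i::nat) = j \<longleftrightarrow> i div k = j div k \<and> i mod k = j mod k"
  by (metis div_mult_mod_eq)

lemma sum_lessThan_mult:
  fixes g :: "nat \<Rightarrow> 'a::comm_monoid_add"
  shows "(\<Sum>i<m * k. g i) = (\<Sum>a<m. \<Sum>b<k. g (a * k + b))"
proof -
  have "(\<Sum>i<m * k. g i) = (\<Sum>a<m. sum g {a * k..<a * k + k})"
    using sum.nat_group[of g k m] by (simp add: mult.commute)
  also have "\<dots> = (\<Sum>a<m. \<Sum>b<k. g (a * k + b))"
  proof (rule sum.cong[OF refl])
    fix a
    show "sum g {a * k..<a * k + k} = (\<Sum>b<k. g (a * k + b))"
      by (rule sum.reindex_bij_witness[of _ "\<lambda>b. a * k + b" "\<lambda>i. i - a * k"]) auto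
  qed
  finally show ?thesis .
qed

lemma dim_kron [simp]:
  "dim_row (kron A B) = dim_row A * dim_row B" "dim_col (kron A B) = dim_col A * dim_col B"
  by (simp_all add: kron_def)

lemma index_kron:
  "i < dim_row A * dim_row B \<Longrightarrow> j < dim_col A * dim_col B \<Longrightarrow>
   kron A B $$ (i, j) = A $$ (i div dim_row B, j div dim_col B) * B $$ (i mod dim_row B, j mod dim_col B)"
  by (simp add: kron_def)

lemma dim_kron_pow [simp]:
  "dim_row (kron_pow A n) = dim_row A ^ n" "dim_col (kron_pow A n) = dim_col A ^ n"
  by (induction n) auto

lemma dim_DJ [simp]: "dim_row (DJ m J) = m" "dim_col (DJ m J) = m"
  by (simp_all add: DJ_def)

lemma dim_Ess [simp]: "dim_row (Ess m s) = m" "dim_col (Ess m s) = m"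
  by (simp_all add: Ess_def)

lemma dim_kron_list_Ess [simp]:
  "dim_row (kron_list (map (Ess m) xs)) = m ^ length xs"
  "dim_col (kron_list (map (Ess m) xs)) = m ^ length xs"
  by (induction xs) auto

text \<open>An index \<open>i < m ^ n\<close> of an \<open>n\<close>-fold Kronecker power is read as \<open>n\<close> base-\<open>m\<close>
  digits, most significant first (the order used by \<open>kron\<close>); \<open>digit_set m n i\<close> is the
  set of these digits, shifted into \<open>{1..m}\<close>.\<close>
fun digit_set :: "nat \<Rightarrow> nat \<Rightarrow> nat \<Rightarrow> nat set" where
  "digit_set m 0 i = {}"
| "digit_set m (Suc n) i = insert (i div m ^ n + 1) (digit_set m n (i mod m ^ n))"

lemma index_kron_pow_DJ:
  assumes "i < m ^ n" "j < m ^ n"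
  shows "kron_pow (DJ m J) n $$ (i, j) = (if i = j \<and> digit_set m n i \<subseteq> J then 1 else 0)"
  using assms
proof (induction n arbitrary: i j)
  case (Suc n)
  note digits = div_mod_less_power[OF Suc.prems(1)] div_mod_less_power[OF Suc.prems(2)]
  show ?case
    using Suc.prems digits Suc.IH[OF digits(2) digits(4)] nat_eq_iff_div_mod_eq[of i j "m ^ n"]
    by (auto simp: index_kron DJ_def)
qed simp

lemma digit_set_subset: "i < m ^ n \<Longrightarrow> digit_set m n i \<subseteq> {1..m}"
proof (induction n arbitrary: i)
  case (Suc n)
  with div_mod_less_power[OF Suc.prems] show ?case
    by auto
qed simp

lemma card_digit_set_le: "card (digit_set m n i) \<le> n"
proof (induction n arbitrary: i)
  case (Suc n)
  have "finite (digit_set m n (i mod m ^ n))"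
    by (induction n arbitrary: i) auto
  with Suc.IH[of "i mod m ^ n"] show ?case
    by (simp add: card_insert_if)
qed simp

lemma ex_digit_set_eq:
  assumes "A \<subseteq> {1..m}" "card A \<le> n" "A = {} \<longleftrightarrow> n = 0"
  shows "\<exists>i<m ^ n. digit_set m n i = A"
  using assms
proof (induction n arbitrary: A)
  case (Suc n)
  have fin: "finite A"
    using Suc.prems(1) finite_subset by blast
  obtain x where "x \<in> A"
    using Suc.prems(3) by blast
  with Suc.prems(1) have x: "x \<in> A" "1 \<le> x" "x \<le> m"
    by auto
  \<comment> \<open>the leading digit is \<open>x\<close>; the remaining \<open>n\<close> digits must cover what is left of \<open>A\<close>\<close>
  define A' where "A' = (if card A = Suc n then A - {x} else A)"
  have "A' \<subseteq> {1..m}" "card A' \<le> n"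
    using Suc.prems x fin by (auto simp: A'_def)
  moreover have "A' = {} \<longleftrightarrow> n = 0"
  proof (cases "card A = Suc n")
    case True
    then have "card A' = n"
      using x fin by (simp add: A'_def)
    then show ?thesis
      using fin by (auto simp: A'_def)
  next
    case False
    have "card A > 0"
      using fin x card_gt_0_iff by blast
    with False show ?thesis
      using Suc.prems(2) x by (auto simp: A'_def)
  qed
  ultimately obtain i' where i': "i' < m ^ n" "digit_set m n i' = A'"
    using Suc.IH by blast
  define i where "i = (x - 1) * m ^ n + i'"
  have "i < x * m ^ n"
    using i' x by (cases x) (auto simp: i_def)
  also have "\<dots> \<le> m ^ Suc n"
    using x by simp
  finally have "i < m ^ Suc n" .
  moreover have "m ^ n > 0"
    using i'(1) by (cases "m ^ n") auto
  then have "i div m ^ n = x - 1" "i mod m ^ n = i'"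
    using i' by (auto simp: i_def)
  then have "digit_set m (Suc n) i = A"
    using i' x by (auto simp: A'_def)
  ultimately show ?case by blast
qed simp

lemma image_digit_set:
  assumes "0 < n"
  shows "digit_set m n ` {..<m ^ n} = {A. A \<subseteq> {1..m} \<and> A \<noteq> {} \<and> card A \<le> n}"
proof (intro equalityI subsetI)
  fix A assume "A \<in> digit_set m n ` {..<m ^ n}"
  then obtain i where "i < m ^ n" "A = digit_set m n i"
    by blast
  moreover have "digit_set m n i \<noteq> {}"
    using assms by (cases n) auto
  ultimately show "A \<in> {A. A \<subseteq> {1..m} \<and> A \<noteq> {} \<and> card A \<le> n}"
    using digit_set_subset card_digit_set_le by auto
next
  fix A assume "A \<in> {A. A \<subseteq> {1..m} \<and> A \<noteq> {} \<and> card A \<le> n}"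
  then show "A \<in> digit_set m n ` {..<m ^ n}"
    using ex_digit_set_eq[of A m n] assms by auto
qed

lemma sum_digit_set_subset:
  "(\<Sum>i<m ^ n. if digit_set m n i \<subseteq> A then 1 else 0 :: real) = real (card (A \<inter> {1..m})) ^ n"
proof (induction n)
  case (Suc n)
  have "{1..m} = Suc ` {..<m}"
    by (simp add: image_Suc_lessThan)
  then have "(\<Sum>a<m. if Suc a \<in> A then 1 else 0 :: real) = (\<Sum>x\<in>{1..m}. if x \<in> A then 1 else 0)"
    by (simp add: sum.reindex)
  also have "\<dots> = real (card (A \<inter> {1..m}))"
    by (simp add: sum.If_cases Int_commute)
  finally have digit: "(\<Sum>a<m. if Suc a \<in> A then 1 else 0 :: real) = real (card (A \<inter> {1..m}))" .
  have "(\<Sum>i<m ^ Suc n. if digit_set m (Suc n) i \<subseteq> A then 1 else 0 :: real)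
     = (\<Sum>a<m. \<Sum>b<m ^ n. if digit_set m (Suc n) (a * m ^ n + b) \<subseteq> A then 1 else 0)"
    by (simp add: sum_lessThan_mult)
  also have "\<dots> = (\<Sum>a<m. \<Sum>b<m ^ n. (if Suc a \<in> A then 1 else 0) * (if digit_set m n b \<subseteq> A then 1 else 0))"
    by (intro sum.cong refl) auto
  also have "\<dots> = (\<Sum>a<m. if Suc a \<in> A then 1 else 0) * (\<Sum>b<m ^ n. if digit_set m n b \<subseteq> A then 1 else 0)"
    by (rule sum_product[symmetric])
  finally show ?case
    using Suc.IH digit by simp
qed simp

text \<open>\<open>run_index m a n\<close> is the index of the basis tensor
  \<open>e\<^sub>a \<otimes> e\<^sub>a\<^sub>+\<^sub>1 \<otimes> \<dots> \<otimes> e\<^sub>a\<^sub>+\<^sub>n\<^sub>-\<^sub>1\<close>.\<close>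
fun run_index :: "nat \<Rightarrow> nat \<Rightarrow> nat \<Rightarrow> nat" where
  "run_index m a 0 = 0"
| "run_index m a (Suc n) = (a - 1) * m ^ n + run_index m (Suc a) n"

lemma run_index_less_and_digit_set:
  assumes "1 \<le> a" "a + n \<le> m + 1"
  shows "run_index m a n < m ^ n \<and> digit_set m n (run_index m a n) = {a..<a + n}"
  using assms
proof (induction n arbitrary: a)
  case (Suc n)
  have IH: "run_index m (Suc a) n < m ^ n" "digit_set m n (run_index m (Suc a) n) = {Suc a..<Suc a + n}"
    using Suc by auto
  have "run_index m a (Suc n) < a * m ^ n"
    using IH Suc.prems by (cases a) auto
  also have "\<dots> \<le> m ^ Suc n"
    using Suc.prems by simp
  finally have "run_index m a (Suc n) < m ^ Suc n" .
  moreover have "m ^ n > 0"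
    using IH(1) by (cases "m ^ n") auto
  then have "run_index m a (Suc n) div m ^ n = a - 1" "run_index m a (Suc n) mod m ^ n = run_index m (Suc a) n"
    using IH by auto
  then have "digit_set m (Suc n) (run_index m a (Suc n)) = {a..<a + Suc n}"
    using IH Suc.prems by auto
  ultimately show ?case by blast
qed simp

lemma index_kron_list_Ess:
  assumes "1 \<le> a" "a + n \<le> m + 1" "i < m ^ n" "j < m ^ n"
  shows "kron_list (map (Ess m) [a..<a + n]) $$ (i, j) = (if i = j \<and> i = run_index m a n then 1 else 0)"
  using assms
proof (induction n arbitrary: a i j)
  case (Suc n)
  note digits = div_mod_less_power[OF Suc.prems(3)] div_mod_less_power[OF Suc.prems(4)]
  define R where "R = kron_list (map (Ess m) [Suc a..<Suc a + n])"
  have "kron_list (map (Ess m) [a..<a + Suc n]) = kron (Ess m a) R"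
    by (simp add: R_def upt_conv_Cons del: upt_Suc)
  moreover have "dim_row R = m ^ n" "dim_col R = m ^ n"
    by (simp_all add: R_def del: upt_Suc)
  ultimately have entry: "kron_list (map (Ess m) [a..<a + Suc n]) $$ (i, j)
      = Ess m a $$ (i div m ^ n, j div m ^ n) * R $$ (i mod m ^ n, j mod m ^ n)"
    using Suc.prems by (simp add: index_kron)
  have "run_index m (Suc a) n < m ^ n"
    using run_index_less_and_digit_set[of "Suc a" n m] Suc.prems by simp
  moreover have "m ^ n > 0"
    using digits(2) by (cases "m ^ n") auto
  ultimately have "i = run_index m a (Suc n) \<longleftrightarrow> i div m ^ n = a - 1 \<and> i mod m ^ n = run_index m (Suc a) n"
    using nat_eq_iff_div_mod_eq[of i "run_index m a (Suc n)" "m ^ n"] by auto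
  then have "Ess m a $$ (i div m ^ n, j div m ^ n) * R $$ (i mod m ^ n, j mod m ^ n)
      = (if i = j \<and> i = run_index m a (Suc n) then 1 else 0)"
    using Suc.prems digits Suc.IH[of "Suc a", OF _ _ digits(2) digits(4), folded R_def]
      nat_eq_iff_div_mod_eq[of i j "m ^ n"]
    by (auto simp: Ess_def)
  with entry show ?case
    by (rule trans)
qed simp

lemma mtrace_mult_diagonal:
  assumes "A \<in> carrier_mat n n" "B \<in> carrier_mat n n"
    and "\<And>i j. i < n \<Longrightarrow> j < n \<Longrightarrow> A $$ (i, j) = (if i = j then a i else 0)"
    and "\<And>i j. i < n \<Longrightarrow> j < n \<Longrightarrow> B $$ (i, j) = (if i = j then b i else 0)"
  shows "mtrace (A * B) = (\<Sum>i<n. a i * b i)"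
  unfolding mtrace_def
proof (rule sum.cong)
  fix i assume i: "i \<in> {..<n}"
  have "(A * B) $$ (i, i) = (\<Sum>k<n. A $$ (i, k) * B $$ (k, i))"
    using assms i by (auto simp: scalar_prod_def atLeast0LessThan)
  also have "\<dots> = (\<Sum>k<n. if k = i then a i * b i else 0)"
    using assms i by (intro sum.cong) auto
  finally show "(A * B) $$ (i, i) = a i * b i"
    using assms i by simp
qed (use assms in simp)

lemma sum_sum_mset_swap: "(\<Sum>i\<in>I. \<Sum>x\<in>#M. g i x) = (\<Sum>x\<in>#M. \<Sum>i\<in>I. g i x)"
  by (induction M) (simp_all add: sum.distrib)

lemma card_supersets_of_card:
  assumes "finite U" "A \<subseteq> U" "card A \<le> k"
  shows "card {T. A \<subseteq> T \<and> T \<subseteq> U \<and> card T = k} = (card U - card A) choose (k - card A)"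
proof -
  have fin: "finite A" "\<And>T. T \<subseteq> U \<Longrightarrow> finite T"
    using assms finite_subset by auto
  have "bij_betw (\<lambda>T. T - A) {T. A \<subseteq> T \<and> T \<subseteq> U \<and> card T = k} {B. B \<subseteq> U - A \<and> card B = k - card A}"
  proof (rule bij_betw_byWitness[where f' = "\<lambda>B. B \<union> A"])
    show "(\<lambda>B. B \<union> A) ` {B. B \<subseteq> U - A \<and> card B = k - card A} \<subseteq> {T. A \<subseteq> T \<and> T \<subseteq> U \<and> card T = k}"
    proof clarify
      fix B assume B: "B \<subseteq> U - A" "card B = k - card A"
      then have "B \<subseteq> U" "B \<inter> A = {}"
        by auto
      then have "finite B" "B \<inter> A = {}"
        using fin(2) by auto
      then show "A \<subseteq> B \<union> A \<and> B \<union> A \<subseteq> U \<and> card (B \<union> A) = k"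
        using B \<open>B \<subseteq> U\<close> assms fin by (simp add: card_Un_disjoint)
    qed
  qed (use assms fin in \<open>auto simp: card_Diff_subset\<close>)
  then have "card {T. A \<subseteq> T \<and> T \<subseteq> U \<and> card T = k} = card {B. B \<subseteq> U - A \<and> card B = k - card A}"
    by (rule bij_betw_same_card)
  also have "\<dots> = (card U - card A) choose (k - card A)"
    using assms fin by (simp add: n_subsets card_Diff_subset)
  finally show ?thesis .
qed

lemma ex_bij_betw_image_eq:
  assumes "finite U" "A \<subseteq> U" "B \<subseteq> U" "card A = card B"
  shows "\<exists>p. bij_betw p U U \<and> p ` A = B"
proof -
  have fin: "finite A" "finite B"
    using assms finite_subset by auto
  obtain f where f: "bij_betw f A B"
    using finite_same_card_bij[OF fin assms(4)] by blast
  have "card (U - A) = card (U - B)"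
    using assms fin by (simp add: card_Diff_subset)
  then obtain g where g: "bij_betw g (U - A) (U - B)"
    using finite_same_card_bij[of "U - A" "U - B"] assms(1) by auto
  define p where "p x = (if x \<in> A then f x else g x)" for x
  have "bij_betw p A B"
    using f by (rule bij_betw_cong[THEN iffD1, rotated]) (simp add: p_def)
  moreover have "bij_betw p (U - A) (U - B)"
    using g by (rule bij_betw_cong[THEN iffD1, rotated]) (simp add: p_def)
  ultimately have "bij_betw p (A \<union> (U - A)) (B \<union> (U - B))"
    by (rule bij_betw_combine) auto
  moreover have "A \<union> (U - A) = U" "B \<union> (U - B) = U"
    using assms by auto
  ultimately show ?thesis
    using \<open>bij_betw p A B\<close> by (auto simp: bij_betw_def)
qed

lemma bij_betw_image_card_subsets:
  assumes p: "bij_betw p U U"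
  shows "bij_betw (image p) {J. J \<subseteq> U \<and> card J = l} {J. J \<subseteq> U \<and> card J = l}"
proof (rule bij_betw_byWitness[where f' = "image (inv_into U p)"])
  have q: "bij_betw (inv_into U p) U U"
    by (rule bij_betw_inv_into[OF p])
  have inj: "inj_on p U" "inj_on (inv_into U p) U" and onto: "p ` U = U" "inv_into U p ` U = U"
    using p q by (auto simp: bij_betw_def)
  then have "\<forall>x\<in>U. p x \<in> U" "\<forall>x\<in>U. inv_into U p x \<in> U"
    by auto
  show "\<forall>J\<in>{J. J \<subseteq> U \<and> card J = l}. inv_into U p ` p ` J = J"
    using inj by (auto intro: inv_into_image_cancel)
  show "\<forall>J\<in>{J. J \<subseteq> U \<and> card J = l}. p ` inv_into U p ` J = J"
    using image_inv_into_cancel[OF onto(1)] by blast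
  show "image p ` {J. J \<subseteq> U \<and> card J = l} \<subseteq> {J. J \<subseteq> U \<and> card J = l}"
    using inj \<open>\<forall>x\<in>U. p x \<in> U\<close> by (auto simp: card_image inj_on_subset)
  show "image (inv_into U p) ` {J. J \<subseteq> U \<and> card J = l} \<subseteq> {J. J \<subseteq> U \<and> card J = l}"
    using inj \<open>\<forall>x\<in>U. inv_into U p x \<in> U\<close> by (auto simp: card_image inj_on_subset)
qed

lemma sum_card_subsets_card_Int_eq:
  assumes "finite U" "A \<subseteq> U" "B \<subseteq> U" "card A = card B"
  shows "(\<Sum>J\<in>{J. J \<subseteq> U \<and> card J = l}. f (card (A \<inter> J)))
       = (\<Sum>J\<in>{J. J \<subseteq> U \<and> card J = l}. f (card (B \<inter> J)))"
proof -
  obtain p where p: "bij_betw p U U" "p ` A = B"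
    using ex_bij_betw_image_eq[OF assms] by blast
  have inj: "inj_on p U"
    using p(1) by (auto simp: bij_betw_def)
  have "(\<Sum>J\<in>{J. J \<subseteq> U \<and> card J = l}. f (card (B \<inter> J)))
      = (\<Sum>J\<in>{J. J \<subseteq> U \<and> card J = l}. f (card (B \<inter> p ` J)))"
    by (rule sum.reindex_bij_betw[OF bij_betw_image_card_subsets[OF p(1)], symmetric])
  also have "\<dots> = (\<Sum>J\<in>{J. J \<subseteq> U \<and> card J = l}. f (card (A \<inter> J)))"
  proof (rule sum.cong[OF refl])
    fix J assume "J \<in> {J. J \<subseteq> U \<and> card J = l}"
    then have "B \<inter> p ` J = p ` (A \<inter> J)" "inj_on p (A \<inter> J)"
      using inj_on_image_Int[OF inj assms(2)] p assms(2) inj_on_subset[OF inj, of "A \<inter> J"] by auto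
    then show "f (card (B \<inter> p ` J)) = f (card (A \<inter> J))"
      by (simp add: card_image)
  qed
  finally show ?thesis ..
qed

lemma finite_lsubsets: "finite (lsubsets l m)"
  unfolding lsubsets_def by (rule finite_subset[of _ "Pow {1..m}"]) auto

lemma card_lsubsets: "card (lsubsets l m) = m choose l"
  using n_subsets[of "{1..m}" l] by (simp add: lsubsets_def)

definition block_count :: "nat set multiset \<Rightarrow> nat set \<Rightarrow> nat" where
  "block_count S A = size (filter_mset (\<lambda>B. A \<subseteq> B) S)"

definition block_density :: "nat set multiset \<Rightarrow> nat set \<Rightarrow> real" where
  "block_density S A = real (block_count S A) / real (size S)"

lemma of_nat_block_count:
  "of_nat (block_count S A) = (\<Sum>B\<in>#S. if A \<subseteq> B then 1 else 0 :: 'a::semiring_1)"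
  by (induction S) (simp_all add: block_count_def)

lemma block_count_lsubsets:
  assumes "A \<subseteq> {1..m}" "card A \<le> l"
  shows "block_count (mset_set (lsubsets l m)) A = (m - card A) choose (l - card A)"
proof -
  have "{J \<in> lsubsets l m. A \<subseteq> J} = {J. A \<subseteq> J \<and> J \<subseteq> {1..m} \<and> card J = l}"
    by (auto simp: lsubsets_def)
  then show ?thesis
    using card_supersets_of_card[of "{1..m}" A l] assms
    by (simp add: block_count_def finite_lsubsets)
qed

lemma block_design_lsubsets:
  assumes "t \<le> l"
  shows "block_design t m l ((m - t) choose (l - t)) (mset_set (lsubsets l m))"
  using block_count_lsubsets[of _ m l] assms
  by (auto simp: block_design_def block_count_def finite_lsubsets lsubsets_def)

lemma sum_block_count:
  assumes "finite TT"
  shows "(\<Sum>T\<in>TT. block_count S T) = (\<Sum>B\<in>#S. card {T\<in>TT. T \<subseteq> B})"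
proof -
  have "(\<Sum>T\<in>TT. block_count S T) = (\<Sum>T\<in>TT. \<Sum>B\<in>#S. if T \<subseteq> B then 1 else 0)"
    using of_nat_block_count[where 'a = nat] by simp
  also have "\<dots> = (\<Sum>B\<in>#S. \<Sum>T\<in>TT. if T \<subseteq> B then 1 else 0)"
    by (rule sum_sum_mset_swap)
  also have "\<dots> = (\<Sum>B\<in>#S. card {T\<in>TT. T \<subseteq> B})"
    using assms by (simp add: sum.inter_filter[symmetric])
  finally show ?thesis .
qed

text \<open>Double counting the pairs \<open>(T, B)\<close> with \<open>A \<subseteq> T \<subseteq> B\<close> and \<open>|T| = t\<close>: a \<open>t\<close>-design is
  also an \<open>s\<close>-design for every \<open>s \<le> t\<close>.\<close>
lemma block_count_of_block_design:
  assumes design: "block_design t m l lam S" and A: "A \<subseteq> {1..m}" "card A \<le> t"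
  shows "block_count S A * ((l - card A) choose (t - card A)) = ((m - card A) choose (t - card A)) * lam"
proof -
  define TT where "TT = {T. A \<subseteq> T \<and> T \<subseteq> {1..m} \<and> card T = t}"
  define K where "K = (l - card A) choose (t - card A)"
  have "finite TT"
    unfolding TT_def by (rule finite_subset[of _ "Pow {1..m}"]) auto
  have "card TT = (m - card A) choose (t - card A)"
    using card_supersets_of_card[of "{1..m}" A t] A by (simp add: TT_def)
  moreover have "\<forall>T\<in>TT. block_count S T = lam"
    using design by (simp add: TT_def block_design_def block_count_def)
  ultimately have "((m - card A) choose (t - card A)) * lam = (\<Sum>T\<in>TT. block_count S T)"
    by simp
  also have "\<dots> = (\<Sum>B\<in>#S. card {T\<in>TT. T \<subseteq> B})"
    by (rule sum_block_count[OF \<open>finite TT\<close>])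
  also have "\<dots> = (\<Sum>B\<in>#S. K * (if A \<subseteq> B then 1 else 0))"
  proof (intro arg_cong[where f = sum_mset] image_mset_cong)
    fix B assume "B \<in># S"
    then have B: "B \<subseteq> {1..m}" "card B = l"
      using design by (auto simp: block_design_def)
    show "card {T\<in>TT. T \<subseteq> B} = K * (if A \<subseteq> B then 1 else 0)"
    proof (cases "A \<subseteq> B")
      case True
      have "{T\<in>TT. T \<subseteq> B} = {T. A \<subseteq> T \<and> T \<subseteq> B \<and> card T = t}"
        using B by (auto simp: TT_def)
      then show ?thesis
        using card_supersets_of_card[of B A t] True A B finite_subset[OF B(1)]
        by (simp add: K_def)
    next
      case False
      then have "{T\<in>TT. T \<subseteq> B} = {}"
        by (auto simp: TT_def)
      then show ?thesis
        using False by (simp only: card.empty) simp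
    qed
  qed
  also have "\<dots> = K * (\<Sum>B\<in>#S. if A \<subseteq> B then 1 else 0)"
    by (rule sum_mset_distrib_left[symmetric])
  also have "\<dots> = block_count S A * K"
    using of_nat_block_count[of S A, where 'a = nat] by (metis of_nat_id mult.commute)
  finally show ?thesis
    by (simp add: K_def)
qed

lemma block_density_eq_iff_block_design:
  fixes S :: "nat set multiset" and t l m :: nat
  defines "L \<equiv> mset_set (lsubsets l m)"
  assumes blocks: "\<forall>J\<in>#S. J \<subseteq> {1..m} \<and> card J = l" and "S \<noteq> {#}"
    and t: "0 < t" "t \<le> l" "l \<le> m"
  shows "(\<forall>A. A \<subseteq> {1..m} \<and> A \<noteq> {} \<and> card A \<le> t \<longrightarrow> block_density S A = block_density L A)
     \<longleftrightarrow> (\<exists>lam. block_design t m l lam S \<and> real lam = real (size S) * block_density L {1..t})"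
proof
  have N: "real (size S) > 0"
    using \<open>S \<noteq> {#}\<close> by (simp add: nonempty_has_size)
  assume eq: "\<forall>A. A \<subseteq> {1..m} \<and> A \<noteq> {} \<and> card A \<le> t \<longrightarrow> block_density S A = block_density L A"
  have density: "block_density S T = block_density L {1..t}" if T: "T \<subseteq> {1..m}" "card T = t" for T
  proof -
    have "T \<noteq> {}"
      using T t by auto
    with eq T have "block_density S T = block_density L T"
      by simp
    also have "block_count L T = block_count L {1..t}"
      using block_count_lsubsets[of T m l] block_count_lsubsets[of "{1..t}" m l] T t
      by (simp add: L_def)
    then have "block_density L T = block_density L {1..t}"
      by (simp add: block_density_def)
    finally show ?thesis .
  qed
  have "block_count S T = block_count S {1..t}" if "T \<subseteq> {1..m}" "card T = t" for T
  proof -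
    have "block_density S T = block_density S {1..t}"
      using density[OF that] density[of "{1..t}"] t by simp
    then show ?thesis
      using \<open>S \<noteq> {#}\<close> by (simp add: block_density_def divide_cancel_right)
  qed
  then have "block_design t m l (block_count S {1..t}) S"
    using blocks by (simp add: block_design_def block_count_def)
  moreover have "real (block_count S {1..t}) = real (size S) * block_density S {1..t}"
    using N by (simp add: block_density_def block_count_def)
  then have "real (block_count S {1..t}) = real (size S) * block_density L {1..t}"
    using density[of "{1..t}"] t by simp
  ultimately show "\<exists>lam. block_design t m l lam S \<and> real lam = real (size S) * block_density L {1..t}"
    by blast
next
  assume "\<exists>lam. block_design t m l lam S \<and> real lam = real (size S) * block_density L {1..t}"
  then obtain lam where design: "block_design t m l lam S"
    and lam: "real lam = real (size S) * block_density L {1..t}"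
    by blast
  show "\<forall>A. A \<subseteq> {1..m} \<and> A \<noteq> {} \<and> card A \<le> t \<longrightarrow> block_density S A = block_density L A"
  proof (intro allI impI)
    fix A assume A: "A \<subseteq> {1..m} \<and> A \<noteq> {} \<and> card A \<le> t"
    define K where "K = real ((l - card A) choose (t - card A))"
    define M where "M = real ((m - card A) choose (t - card A))"
    define lamL where "lamL = real ((m - t) choose (l - t))"
    have "K > 0"
      using A t by (simp add: K_def)
    have C: "real (size L) > 0"
      using t by (simp add: L_def finite_lsubsets card_lsubsets)
    from A have "block_count S A * ((l - card A) choose (t - card A)) = ((m - card A) choose (t - card A)) * lam"
      by (intro block_count_of_block_design[OF design]) simp_all
    then have S_count: "real (block_count S A) * K = M * real lam"
      unfolding K_def M_def by (metis of_nat_mult)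
    from A have "block_count L A * ((l - card A) choose (t - card A)) = ((m - card A) choose (t - card A)) * ((m - t) choose (l - t))"
      unfolding L_def by (intro block_count_of_block_design[OF block_design_lsubsets[OF t(2)]]) simp_all
    then have L_count: "real (block_count L A) * K = M * lamL"
      unfolding K_def M_def lamL_def by (metis of_nat_mult)
    have "block_density L {1..t} = lamL / real (size L)"
      using block_count_lsubsets[of "{1..t}" m l] t
      by (simp add: block_density_def L_def lamL_def)
    have "block_density S A * K = M * real lam / real (size S)"
      using S_count by (simp add: block_density_def)
    also have "\<dots> = M * lamL / real (size L)"
      using lam \<open>block_density L {1..t} = lamL / real (size L)\<close> \<open>S \<noteq> {#}\<close> by simp
    also have "\<dots> = block_density L A * K"
      using L_count by (simp add: block_density_def)
    finally have "block_density S A * K = block_density L A * K" .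
    then show "block_density S A = block_density L A"
      using \<open>K > 0\<close> by simp
  qed
qed

lemma index_Dtlm:
  assumes "i < m ^ t" "j < m ^ t"
  shows "Dtlm t l m $$ (i, j)
    = (if i = j then block_density (mset_set (lsubsets l m)) (digit_set m t i) else 0)"
proof -
  have "Dtlm t l m $$ (i, j) = (1 / real (m choose l)) * (\<Sum>J\<in>lsubsets l m. kron_pow (DJ m J) t $$ (i, j))"
    using assms by (simp add: Dtlm_def)
  also have "\<dots> = (1 / real (m choose l)) * (\<Sum>J\<in>lsubsets l m. if i = j \<and> digit_set m t i \<subseteq> J then 1 else 0)"
    using assms by (simp only: index_kron_pow_DJ)
  finally have entry: "Dtlm t l m $$ (i, j)
      = (1 / real (m choose l)) * (\<Sum>J\<in>lsubsets l m. if i = j \<and> digit_set m t i \<subseteq> J then 1 else 0)" .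
  have "real (block_count (mset_set (lsubsets l m)) (digit_set m t i))
      = (\<Sum>J\<in>lsubsets l m. if digit_set m t i \<subseteq> J then 1 else 0)"
    unfolding of_nat_block_count sum_unfold_sum_mset ..
  with entry show ?thesis
    by (cases "i = j") (simp_all add: block_density_def finite_lsubsets card_lsubsets)
qed

lemma mtrace_Dtlm_square:
  "mtrace (Dtlm t l m * Dtlm t l m)
    = (\<Sum>i<m ^ t. block_density (mset_set (lsubsets l m)) (digit_set m t i) ^ 2)"
proof -
  have "Dtlm t l m \<in> carrier_mat (m ^ t) (m ^ t)"
    by (simp add: Dtlm_def)
  from mtrace_mult_diagonal[OF this this index_Dtlm index_Dtlm] show ?thesis
    by (simp add: power2_eq_square)
qed

lemma mtrace_Dtlm_Ess:
  assumes "t \<le> m"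
  shows "mtrace (Dtlm t l m * kron_list (map (Ess m) [1..<t + 1]))
    = block_density (mset_set (lsubsets l m)) {1..t}"
proof -
  \<comment> \<open>\<open>E\<close> stays opaque: simp would expand \<open>[1..<t + 1]\<close> by \<open>upt_Suc\<close>\<close>
  define E where "E = kron_list (map (Ess m) [1..<t + 1])"
  have E: "kron_list (map (Ess m) [1..<1 + t]) = E"
    by (simp only: E_def add.commute)
  let ?i0 = "run_index m 1 t"
  have le: "1 + t \<le> m + 1"
    using assms by simp
  note run = run_index_less_and_digit_set[OF order_refl le]
  have "{1..<1 + t} = {1..t}"
    by auto
  with run have i0: "?i0 < m ^ t" "digit_set m t ?i0 = {1..t}"
    by simp_all
  have Dtlm: "Dtlm t l m \<in> carrier_mat (m ^ t) (m ^ t)"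
    by (simp add: Dtlm_def)
  have "E \<in> carrier_mat (m ^ t) (m ^ t)"
    unfolding E_def carrier_mat_def by (simp only: mem_Collect_eq dim_kron_list_Ess length_upt) simp
  moreover have "E $$ (i, j) = (if i = j then (if i = ?i0 then 1 else 0) else 0)"
    if "i < m ^ t" "j < m ^ t" for i j
    using index_kron_list_Ess[OF order_refl le that, unfolded E] by simp
  ultimately have "mtrace (Dtlm t l m * E)
      = (\<Sum>i<m ^ t. block_density (mset_set (lsubsets l m)) (digit_set m t i) * (if i = ?i0 then 1 else 0))"
    by (intro mtrace_mult_diagonal[OF Dtlm]) (simp_all add: index_Dtlm)
  also have "\<dots> = block_density (mset_set (lsubsets l m)) {1..t}"
    using i0 by (simp add: if_distrib cong: if_cong)
  finally show ?thesis
    by (simp only: E_def)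
qed

lemma sum_block_count_mult:
  assumes "\<forall>J\<in>#S. J \<subseteq> {1..m}" "\<forall>J\<in>#T. J \<subseteq> {1..m}"
  shows "(\<Sum>i<m ^ t. real (block_count S (digit_set m t i)) * real (block_count T (digit_set m t i)))
    = (\<Sum>J\<in>#S. \<Sum>J'\<in>#T. real (card (J \<inter> J')) ^ t)"
proof -
  let ?ind = "\<lambda>i J. if digit_set m t i \<subseteq> J then 1 else 0 :: real"
  have "(\<Sum>i<m ^ t. real (block_count S (digit_set m t i)) * real (block_count T (digit_set m t i)))
      = (\<Sum>i<m ^ t. \<Sum>J\<in>#S. \<Sum>J'\<in>#T. ?ind i J * ?ind i J')"
    unfolding of_nat_block_count sum_mset_distrib_right by (simp only: sum_mset_distrib_left)
  also have "\<dots> = (\<Sum>J\<in>#S. \<Sum>J'\<in>#T. \<Sum>i<m ^ t. ?ind i J * ?ind i J')"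
    by (simp only: sum_sum_mset_swap)
  also have "\<dots> = (\<Sum>J\<in>#S. \<Sum>J'\<in>#T. real (card (J \<inter> J')) ^ t)"
  proof (intro arg_cong[where f = sum_mset] image_mset_cong)
    fix J J' assume "J \<in># S" "J' \<in># T"
    then have "J \<inter> J' \<inter> {1..m} = J \<inter> J'"
      using assms by auto
    moreover have "(\<Sum>i<m ^ t. ?ind i J * ?ind i J') = (\<Sum>i<m ^ t. ?ind i (J \<inter> J'))"
      by (intro sum.cong) auto
    ultimately show "(\<Sum>i<m ^ t. ?ind i J * ?ind i J') = real (card (J \<inter> J')) ^ t"
      using sum_digit_set_subset[of m t "J \<inter> J'"] by simp
  qed
  finally show ?thesis .
qed

lemma sum_block_density_mult_lsubsets:
  assumes blocks: "\<forall>J\<in>#S. J \<in> lsubsets l m" and "S \<noteq> {#}" and J0: "J0 \<in> lsubsets l m"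
  shows "(\<Sum>i<m ^ t. block_density S (digit_set m t i) * block_density (mset_set (lsubsets l m)) (digit_set m t i))
    = (\<Sum>J\<in>lsubsets l m. real (card (J0 \<inter> J)) ^ t) / real (m choose l)"
proof -
  let ?L = "mset_set (lsubsets l m)"
  let ?W = "\<Sum>J\<in>lsubsets l m. real (card (J0 \<inter> J)) ^ t"
  have "(\<Sum>i<m ^ t. real (block_count S (digit_set m t i)) * real (block_count ?L (digit_set m t i)))
      = (\<Sum>J\<in>#S. \<Sum>J'\<in>#?L. real (card (J \<inter> J')) ^ t)"
    using blocks by (intro sum_block_count_mult) (auto simp: lsubsets_def finite_lsubsets)
  also have "\<dots> = (\<Sum>J\<in>#S. ?W)"
  proof (intro arg_cong[where f = sum_mset] image_mset_cong)
    fix J assume "J \<in># S"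
    then have "J \<subseteq> {1..m}" "card J = card J0"
      using blocks J0 by (auto simp: lsubsets_def)
    then show "(\<Sum>J'\<in>#?L. real (card (J \<inter> J')) ^ t) = ?W"
      using sum_card_subsets_card_Int_eq[where U = "{1..m}" and A = J and B = J0 and l = l
          and f = "\<lambda>k. real k ^ t"] J0
      by (simp add: lsubsets_def sum_unfold_sum_mset[symmetric])
  qed
  finally show ?thesis
    using \<open>S \<noteq> {#}\<close>
    by (simp add: block_density_def finite_lsubsets card_lsubsets sum_divide_distrib[symmetric])
qed

lemma intersection_moment_eq_mtrace_add:
  assumes blocks: "\<forall>J\<in>#S. J \<subseteq> {1..m} \<and> card J = l" and "S \<noteq> {#}"
  shows "(1 / real (size S) ^ 2) * (\<Sum>J\<in>#S. \<Sum>J'\<in>#S. real (card (J \<inter> J')) ^ t)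
    = mtrace (Dtlm t l m * Dtlm t l m)
      + (\<Sum>i<m ^ t. (block_density S (digit_set m t i)
                     - block_density (mset_set (lsubsets l m)) (digit_set m t i)) ^ 2)"
proof -
  define L where "L = mset_set (lsubsets l m)"
  define f where "f i = block_density S (digit_set m t i)" for i
  define d where "d i = block_density L (digit_set m t i)" for i
  obtain J0 where "J0 \<in># S"
    using \<open>S \<noteq> {#}\<close> by (meson multiset_nonemptyE)
  have S: "\<forall>J\<in>#S. J \<in> lsubsets l m"
    using blocks by (simp add: lsubsets_def)
  then have J0: "J0 \<in> lsubsets l m"
    using \<open>J0 \<in># S\<close> by blast
  then have L: "\<forall>J\<in>#L. J \<in> lsubsets l m" "L \<noteq> {#}"
    by (auto simp: L_def finite_lsubsets mset_set_empty_iff)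
  define W where "W = (\<Sum>J\<in>lsubsets l m. real (card (J0 \<inter> J)) ^ t) / real (m choose l)"
  have fd: "(\<Sum>i<m ^ t. f i * d i) = W"
    unfolding f_def d_def L_def W_def by (rule sum_block_density_mult_lsubsets[OF S \<open>S \<noteq> {#}\<close> J0])
  have dd: "(\<Sum>i<m ^ t. d i * d i) = W"
    unfolding d_def W_def by (rule sum_block_density_mult_lsubsets[OF L J0, folded L_def])
  have "(\<Sum>i<m ^ t. f i * f i) = (\<Sum>i<m ^ t. real (block_count S (digit_set m t i))
      * real (block_count S (digit_set m t i))) / real (size S) ^ 2"
    by (simp add: f_def block_density_def sum_divide_distrib power2_eq_square)
  also have "\<dots> = (\<Sum>J\<in>#S. \<Sum>J'\<in>#S. real (card (J \<inter> J')) ^ t) / real (size S) ^ 2"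
    using blocks by (subst sum_block_count_mult) auto
  also have "\<dots> = (1 / real (size S) ^ 2) * (\<Sum>J\<in>#S. \<Sum>J'\<in>#S. real (card (J \<inter> J')) ^ t)"
    by (simp only: times_divide_eq_left mult_1)
  finally have ff: "(1 / real (size S) ^ 2) * (\<Sum>J\<in>#S. \<Sum>J'\<in>#S. real (card (J \<inter> J')) ^ t)
      = (\<Sum>i<m ^ t. f i * f i)" ..
  have tr: "mtrace (Dtlm t l m * Dtlm t l m) = (\<Sum>i<m ^ t. d i * d i)"
    by (simp add: d_def L_def mtrace_Dtlm_square power2_eq_square)
  have "(\<Sum>i<m ^ t. (f i - d i) ^ 2) = (\<Sum>i<m ^ t. f i * f i - 2 * (f i * d i) + d i * d i)"
    by (intro sum.cong) (simp_all add: power2_eq_square algebra_simps)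
  also have "\<dots> = (\<Sum>i<m ^ t. f i * f i) - 2 * (\<Sum>i<m ^ t. f i * d i) + (\<Sum>i<m ^ t. d i * d i)"
    by (simp add: sum.distrib sum_subtractf sum_distrib_left)
  finally have "(\<Sum>i<m ^ t. (f i - d i) ^ 2)
      = (\<Sum>i<m ^ t. f i * f i) - 2 * (\<Sum>i<m ^ t. f i * d i) + (\<Sum>i<m ^ t. d i * d i)" .
  with ff fd dd tr show ?thesis
    by (simp add: f_def d_def L_def)
qed

theorem corollary3p16:
  fixes S :: "nat set multiset" and t l m :: nat
  assumes blocks: "\<forall>J\<in>#S. J \<subseteq> {1..m} \<and> card J = l"
    and nonempty: "S \<noteq> {#}"
    and tpos: "0 < t"
    and tl: "t \<le> l"
  shows "(1 / real (size S) ^ 2) * (\<Sum>J\<in>#S. \<Sum>J'\<in>#S. real (card (J \<inter> J')) ^ t)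
           \<ge> mtrace (Dtlm t l m * Dtlm t l m)
    \<and> ((1 / real (size S) ^ 2) * (\<Sum>J\<in>#S. \<Sum>J'\<in>#S. real (card (J \<inter> J')) ^ t)
           = mtrace (Dtlm t l m * Dtlm t l m)
       \<longleftrightarrow> (\<exists>lam. block_design t m l lam S \<and>
              real lam = real (size S) * mtrace (Dtlm t l m * kron_list (map (Ess m) [1..<t+1]))))"
proof -
  define L where "L = mset_set (lsubsets l m)"
  define gap where "gap = (\<Sum>i<m ^ t. (block_density S (digit_set m t i) - block_density L (digit_set m t i)) ^ 2)"
  obtain J0 where "J0 \<in># S"
    using nonempty by (meson multiset_nonemptyE)
  then have "l \<le> m"
    using blocks card_mono[of "{1..m}" J0] by auto
  have "gap = 0 \<longleftrightarrow> (\<forall>i\<in>{..<m ^ t}. block_density S (digit_set m t i) = block_density L (digit_set m t i))"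
    unfolding gap_def by (subst sum_nonneg_eq_0_iff) auto
  also have "\<dots> \<longleftrightarrow> (\<forall>A\<in>digit_set m t ` {..<m ^ t}. block_density S A = block_density L A)"
    by simp
  also have "\<dots> \<longleftrightarrow> (\<forall>A. A \<subseteq> {1..m} \<and> A \<noteq> {} \<and> card A \<le> t \<longrightarrow> block_density S A = block_density L A)"
    unfolding image_digit_set[OF tpos] by blast
  also have "\<dots> \<longleftrightarrow> (\<exists>lam. block_design t m l lam S \<and> real lam = real (size S) * block_density L {1..t})"
    unfolding L_def using blocks nonempty tpos tl \<open>l \<le> m\<close> by (rule block_density_eq_iff_block_design)
  also have "block_density L {1..t} = mtrace (Dtlm t l m * kron_list (map (Ess m) [1..<t + 1]))"
    unfolding L_def by (rule mtrace_Dtlm_Ess[symmetric]) (use tl \<open>l \<le> m\<close> in simp)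
  finally have "gap = 0 \<longleftrightarrow> (\<exists>lam. block_design t m l lam S
      \<and> real lam = real (size S) * mtrace (Dtlm t l m * kron_list (map (Ess m) [1..<t + 1])))" .
  moreover have "gap \<ge> 0"
    unfolding gap_def by (intro sum_nonneg) simp
  ultimately show ?thesis
    using intersection_moment_eq_mtrace_add[OF blocks nonempty, of t] by (simp add: gap_def L_def)
qed

end
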